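(* Let $P\subset\mathbb R^d$ be a $d$-polytope, $d\geq 3$, $S$ a simplex facet of $P$ in bounded position, $\mathcal F\subseteq\operatorname{adj}(S)$ nonsimple, and $G$ a subridge ($(d-3)$-face) of $P$ with $G\subseteq S$. Let $\varphi=|\{F\in\mathcal F: G\subseteq F\}|$, $v\in V_S(\mathcal F,\emptyset;P)$ and $Q=\operatorname{conv}(P\cup\{v\})$. Then $0\leq\varphi\leq 2$, $G$ is a face of $Q$, and $\operatorname{fdeg}_Q(G)=\operatorname{fdeg}_P(G)+1-\varphi$.
   Context: For a face $G$ of a polytope $X$, $\operatorname{fdeg}_X(G)$ is the number of facets of $X$ containing $G$. For a facet $F$ of $P$ let $H_F=\{x:\langle x,a_F\rangle=\ell_F\}$ be its affine hull, oriented so that $P\subseteq\{x:\langle x,a_F\rangle\geq\ell_F\}$; $H_F^+$, $H_F^-$ are the open sides $\{>\}$, $\{<\}$. Two facets are adjacent if they share a ridge; $\operatorname{adj}(S)$ is the set of facets adjacent to $S$. A simplex facet is a facet combinatorially equivalent to a $(d-1)$-simplex. $S$ is in bounded position if for every set of $d$ facets in $\operatorname{adj}(S)$ their hyperplanes meet in a point of $H_S^-$. $\mathcal F\subseteq\operatorname{adj}(S)$ is nonsimple if there is no pair of adjacent facets $G,G'\in\mathcal F$ having a common $(d-3)$-face with $S$. $V_S(\mathcal F,\mathcal N;P)$ is the set of points lying in $H_F^-$ for $F\in\mathcal N\cup\{S\}$, in $H_F$ for $F\in\mathcal F$, and in $H_F^+$ for all other facets $F$ of $P$. *)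

theory Defs
  imports "HOL-Analysis.Analysis"
begin

definition d_polytope :: "'a::euclidean_space set \<Rightarrow> bool" where
  "d_polytope P \<longleftrightarrow> polytope P \<and> aff_dim P = int DIM('a)"

definition fdeg :: "'a::euclidean_space set \<Rightarrow> 'a set \<Rightarrow> nat" where
  "fdeg X G = card {F. F facet_of X \<and> G \<subseteq> F}"

definition hyp :: "'a::euclidean_space set \<Rightarrow> 'a set" where
  "hyp F = affine hull F"

definition hplus :: "'a::euclidean_space set \<Rightarrow> 'a set \<Rightarrow> 'a set" where
  "hplus P F = {x. \<exists>a l. a \<noteq> 0 \<and> affine hull F = {y. a \<bullet> y = l}
                      \<and> P \<subseteq> {y. a \<bullet> y \<ge> l} \<and> a \<bullet> x > l}"

definition hminus :: "'a::euclidean_space set \<Rightarrow> 'a set \<Rightarrow> 'a set" where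
  "hminus P F = {x. \<exists>a l. a \<noteq> 0 \<and> affine hull F = {y. a \<bullet> y = l}
                      \<and> P \<subseteq> {y. a \<bullet> y \<ge> l} \<and> a \<bullet> x < l}"

definition adjacent :: "'a::euclidean_space set \<Rightarrow> 'a set \<Rightarrow> 'a set \<Rightarrow> bool" where
  "adjacent P F F' \<longleftrightarrow> F facet_of P \<and> F' facet_of P \<and> F \<noteq> F' \<and>
     (\<exists>R. R face_of P \<and> aff_dim R = int DIM('a) - 2 \<and> R \<subseteq> F \<inter> F')"

definition adj :: "'a::euclidean_space set \<Rightarrow> 'a set \<Rightarrow> 'a set set" where
  "adj P S = {F. adjacent P S F}"

definition comb_equiv :: "'a::euclidean_space set \<Rightarrow> 'a set \<Rightarrow> bool" where
  "comb_equiv X Y \<longleftrightarrow> (\<exists>f. bij_betw f {F. F face_of X} {F. F face_of Y} \<and>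
     (\<forall>F G. F face_of X \<longrightarrow> G face_of X \<longrightarrow> (F \<subseteq> G \<longleftrightarrow> f F \<subseteq> f G)))"

definition simplex_facet :: "'a::euclidean_space set \<Rightarrow> 'a set \<Rightarrow> bool" where
  "simplex_facet P S \<longleftrightarrow> S facet_of P \<and>
     (\<exists>T. (int DIM('a) - 1) simplex T \<and> comb_equiv S T)"

definition bounded_position :: "'a::euclidean_space set \<Rightarrow> 'a set \<Rightarrow> bool" where
  "bounded_position P S \<longleftrightarrow> (\<forall>\<G>. \<G> \<subseteq> adj P S \<and> card \<G> = DIM('a) \<longrightarrow>
      (\<exists>x. (\<Inter>F\<in>\<G>. hyp F) = {x} \<and> x \<in> hminus P S))"

definition nonsimple :: "'a::euclidean_space set \<Rightarrow> 'a set \<Rightarrow> 'a set set \<Rightarrow> bool" where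
  "nonsimple P S \<F> \<longleftrightarrow> \<F> \<subseteq> adj P S \<and>
     \<not> (\<exists>G\<in>\<F>. \<exists>G'\<in>\<F>. adjacent P G G' \<and>
          (\<exists>K. K face_of P \<and> aff_dim K = int DIM('a) - 3 \<and> K \<subseteq> G \<inter> G' \<inter> S))"

definition VS :: "'a::euclidean_space set \<Rightarrow> 'a set set \<Rightarrow> 'a set set \<Rightarrow> 'a set \<Rightarrow> 'a set" where
  "VS S \<F> \<N> P = {x. (\<forall>F\<in>\<N> \<union> {S}. x \<in> hminus P F) \<and> (\<forall>F\<in>\<F>. x \<in> hyp F) \<and>
      (\<forall>F. F facet_of P \<and> F \<notin> \<F> \<union> \<N> \<union> {S} \<longrightarrow> x \<in> hplus P F)}"

end

theory Submission
  imports Defs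
begin

(* Q = conv (P \<union> {v}) arises from P by a beneath-beyond step in which S is the only
   facet visible from v. The trace map E \<mapsto> P \<inter> E is a bijection from the facets of Q
   onto the facets of P beneath v (which remain facets of Q), the facets in \<F>, whose
   hyperplanes contain v (they are coned to v), and the horizon ridges S \<inter> F for the
   facets F adjacent to S with v beneath F (also coned to v). Of the facets of P through G
   only S is lost. As G is a ridge of S, it lies in exactly two ridges of S, that is, in
   exactly two facets adjacent to S: phi of them belong to \<F>, and the other 2 - phi yield
   horizon facets of Q through G. Hence fdeg Q G = fdeg P G - 1 + (2 - phi). Nonsimplicity
   of \<F> provides a facet of P beneath v through G, and G is a face of that facet of Q.

   Behind both the classification and the fact that a ridge lies in exactly two facets is
   one piece of linear algebra: the normals of at most three facets through a common point
   are linearly independent, because a dependency in which some sign occurs at most once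
   would force one facet into another. *)

section \<open>Faces of convex sets\<close>

lemma face_of_subset_aff_dim_eq:
  fixes X :: "'a::euclidean_space set"
  assumes "A face_of X" "B face_of X" "A \<subseteq> B" "aff_dim B \<le> aff_dim A"
  shows "A = B"
  by (meson assms face_of_aff_dim_lt face_of_imp_convex face_of_imp_subset face_of_subset not_less)

lemma facet_of_subset_face_eq:
  fixes X :: "'a::euclidean_space set"
  assumes "convex X" "E facet_of X" "E' face_of X" "E' \<noteq> X" "E \<subseteq> E'"
  shows "E = E'"
proof (rule face_of_subset_aff_dim_eq)
  show "aff_dim E' \<le> aff_dim E"
    using face_of_aff_dim_lt[OF assms(1,3,4)] assms(2) by (simp add: facet_of_def)
qed (use assms facet_of_imp_face_of in auto)

lemma facet_of_subset_eq:
  fixes X :: "'a::euclidean_space set"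
  assumes "convex X" "F facet_of X" "F' facet_of X" "F \<subseteq> F'"
  shows "F = F'"
  using assms facet_of_subset_face_eq facet_of_imp_face_of facet_of_irrefl by blast

lemma aff_dim_facet_Int_facet:
  fixes X :: "'a::euclidean_space set"
  assumes "convex X" "F facet_of X" "S facet_of X" "F \<noteq> S"
  shows "aff_dim (F \<inter> S) \<le> aff_dim X - 2"
proof -
  have "F \<inter> S face_of X" "S face_of X"
    using assms face_of_Int facet_of_imp_face_of by blast+
  moreover have "F \<inter> S \<noteq> S"
    using assms facet_of_subset_eq by blast
  ultimately have "aff_dim (F \<inter> S) < aff_dim S"
    by (meson face_of_subset_aff_dim_eq inf_le2 not_le)
  then show ?thesis
    using assms(3) by (simp add: facet_of_def)
qed

lemma facet_Int_facet_eq_ridge: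
  fixes P :: "'a::euclidean_space set"
  assumes "convex P" "F facet_of P" "S facet_of P" "F \<noteq> S"
    and "R face_of P" "aff_dim R = aff_dim P - 2" "R \<subseteq> F \<inter> S"
  shows "F \<inter> S = R"
proof (rule face_of_subset_aff_dim_eq[symmetric])
  show "F \<inter> S face_of P"
    using assms(2,3) face_of_Int facet_of_imp_face_of by blast
  show "aff_dim (F \<inter> S) \<le> aff_dim R"
    using aff_dim_facet_Int_facet[OF assms(1-4)] assms(6) by simp
qed (use assms in auto)

lemma convex_hull_Int_supporting_hyperplane:
  assumes "T \<subseteq> {x. a \<bullet> x \<le> b}"
  shows "convex hull T \<inter> {x. a \<bullet> x = b} = convex hull (T \<inter> {x. a \<bullet> x = b})"
proof
  let ?H = "{x. a \<bullet> x = b}"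
  let ?M = "{x \<in> convex hull T. a \<bullet> x = b \<longrightarrow> x \<in> convex hull (T \<inter> ?H)}"
  have below: "convex hull T \<subseteq> {x. a \<bullet> x \<le> b}"
    using assms by (simp add: convex_halfspace_le hull_minimal)
  have "convex ?M"
  proof (rule convexI)
    fix x y and u w :: real
    assume x: "x \<in> ?M" and y: "y \<in> ?M" and uw: "0 \<le> u" "0 \<le> w" "u + w = 1"
    let ?z = "u *\<^sub>R x + w *\<^sub>R y"
    \<comment> \<open>a convex combination on the hyperplane only involves points on the hyperplane\<close>
    have "?z \<in> convex hull (T \<inter> ?H)" if on: "a \<bullet> ?z = b"
    proof -
      have "u * (b - a \<bullet> x) + w * (b - a \<bullet> y) = 0"
        using on uw by (simp add: algebra_simps flip: distrib_left)
      moreover have "0 \<le> u * (b - a \<bullet> x)" "0 \<le> w * (b - a \<bullet> y)"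
        using below x y uw by auto
      ultimately have "u = 0 \<or> a \<bullet> x = b" "w = 0 \<or> a \<bullet> y = b"
        by (auto simp: add_nonneg_eq_0_iff)
      then show ?thesis
        using x y uw convexD[OF convex_convex_hull, of x "T \<inter> ?H" y u w] by auto
    qed
    then show "?z \<in> ?M"
      using convexD[OF convex_convex_hull] x y uw by blast
  qed
  then have "convex hull T \<subseteq> ?M"
    by (intro hull_minimal) (auto intro: hull_inc)
  then show "convex hull T \<inter> ?H \<subseteq> convex hull (T \<inter> ?H)"
    by blast
  show "convex hull (T \<inter> ?H) \<subseteq> convex hull T \<inter> ?H"
    by (simp add: convex_hyperplane hull_minimal hull_mono hull_subset le_infI2)
qed

section \<open>Facet normals and ridges\<close>

definition exposing_ineq :: "'a::euclidean_space set \<Rightarrow> 'a set \<Rightarrow> 'a \<Rightarrow> real \<Rightarrow> bool" where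
  "exposing_ineq X F a b \<longleftrightarrow> a \<noteq> 0 \<and> X \<subseteq> {x. a \<bullet> x \<le> b} \<and> F = X \<inter> {x. a \<bullet> x = b}"

lemma exposing_ineq_on_face: "exposing_ineq X F a b \<Longrightarrow> x \<in> F \<Longrightarrow> a \<bullet> x = b"
  unfolding exposing_ineq_def by blast

lemma facet_normals_in_span:
  fixes X :: "'a::euclidean_space set"
  assumes "polytope X" "r \<in> X"
  obtains n b where "\<And>F. F facet_of X \<Longrightarrow> exposing_ineq X F (n F) (b F) \<and> n F \<in> span ((+) (- r) ` X)"
proof -
  have "\<exists>a c. exposing_ineq X F a c \<and> a \<in> span ((+) (- r) ` X)" if F: "F facet_of X" for F
  proof -
    obtain a0 c0 where "a0 \<noteq> 0" "X \<subseteq> {x. a0 \<bullet> x \<le> c0}" "F = X \<inter> {x. a0 \<bullet> x = c0}"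
      using facet_of_polyhedron[OF polytope_imp_polyhedron[OF assms(1)] F] by metis
    moreover obtain a z where a: "a \<in> span ((+) (- r) ` X)" "a0 = a + z"
      and z: "\<And>w. w \<in> span ((+) (- r) ` X) \<Longrightarrow> orthogonal z w"
      using orthogonal_subspace_decomp_exists by metis
    \<comment> \<open>z is orthogonal to the directions of X, so z \<bullet> x is constant on X and moves into the bound\<close>
    moreover have "a0 \<bullet> x = a \<bullet> x + z \<bullet> r" if "x \<in> X" for x
    proof -
      have "z \<bullet> (- r + x) = 0"
        using z[of "- r + x"] that by (simp add: span_base orthogonal_def)
      then show ?thesis
        using a(2) by (simp add: inner_add_left inner_diff_right)
    qed
    ultimately have "X \<subseteq> {x. a \<bullet> x \<le> c0 - z \<bullet> r}" "F = X \<inter> {x. a \<bullet> x = c0 - z \<bullet> r}"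
      by force+
    moreover have "a \<noteq> 0"
      using calculation F by (cases "c0 - z \<bullet> r = 0") (auto simp: facet_of_def)
    ultimately show ?thesis
      using a(1) unfolding exposing_ineq_def by blast
  qed
  then have "\<forall>F. \<exists>p. F facet_of X \<longrightarrow> exposing_ineq X F (fst p) (snd p) \<and> fst p \<in> span ((+) (- r) ` X)"
    by simp
  then obtain p where
    "\<And>F. F facet_of X \<Longrightarrow> exposing_ineq X F (fst (p F)) (snd (p F)) \<and> fst (p F) \<in> span ((+) (- r) ` X)"
    by metis
  then show ?thesis
    by (rule that)
qed

lemma facet_normals_one_sided_dependency_trivial:
  fixes X :: "'a::euclidean_space set"
  assumes "convex X" "finite T"
    and T: "\<And>F. F \<in> T \<Longrightarrow> F facet_of X \<and> exposing_ineq X F (n F) (b F) \<and> r \<in> F"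
    and sum: "(\<Sum>F\<in>T. l F *\<^sub>R n F) = 0"
    and k: "k \<in> T" "\<And>F. F \<in> T \<Longrightarrow> F \<noteq> k \<Longrightarrow> l F \<le> 0"
  shows "\<forall>F\<in>T. l F = 0"
proof -
  have on_r: "b F = n F \<bullet> r" if "F \<in> T" for F
    using T[OF that] exposing_ineq_on_face by metis
  have slack: "(\<Sum>F\<in>T. l F * (n F \<bullet> x - b F)) = 0" for x
  proof -
    have "(\<Sum>F\<in>T. l F * (n F \<bullet> x - b F)) = (\<Sum>F\<in>T. (l F *\<^sub>R n F) \<bullet> (x - r))"
      by (rule sum.cong) (simp_all add: on_r inner_diff_right right_diff_distrib)
    also have "\<dots> = (\<Sum>F\<in>T. l F *\<^sub>R n F) \<bullet> (x - r)"
      by (rule inner_sum_left[symmetric])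
    finally show ?thesis
      using sum by simp
  qed
  have others: "l F = 0" if F: "F \<in> T" "F \<noteq> k" for F
  proof (rule ccontr)
    assume "l F \<noteq> 0"
    \<comment> \<open>on the facet k every term of the dependency is nonnegative, so the one of F vanishes\<close>
    have "k \<subseteq> F"
    proof
      fix x assume "x \<in> k"
      then have "x \<in> X"
        using T[OF k(1)] facet_of_imp_subset by blast
      have nonneg: "0 \<le> l G * (n G \<bullet> x - b G)" if "G \<in> T - {k}" for G
      proof (rule mult_nonpos_nonpos)
        show "l G \<le> 0"
          using k(2) that by blast
        show "n G \<bullet> x - b G \<le> 0"
          using T[of G] that \<open>x \<in> X\<close> unfolding exposing_ineq_def by auto
      qed
      have "n k \<bullet> x = b k"
        using T[OF k(1)] \<open>x \<in> k\<close> exposing_ineq_on_face by blast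
      then have "(\<Sum>G\<in>T - {k}. l G * (n G \<bullet> x - b G)) = 0"
        using slack[of x] by (simp add: sum.remove[OF assms(2) k(1)])
      then have "\<forall>G\<in>T - {k}. l G * (n G \<bullet> x - b G) = 0"
        by (subst (asm) sum_nonneg_eq_0_iff) (use nonneg assms(2) in auto)
      then have "l F * (n F \<bullet> x - b F) = 0"
        using F by blast
      then show "x \<in> F"
        using \<open>l F \<noteq> 0\<close> T[OF F(1)] \<open>x \<in> X\<close> unfolding exposing_ineq_def by auto
    qed
    then show False
      using facet_of_subset_eq[OF assms(1), of k F] T[OF k(1)] T[OF F(1)] F(2) by blast
  qed
  then have "l k *\<^sub>R n k = 0"
    using sum k(1) assms(2) by (simp add: sum.remove)
  then show ?thesis
    using others T[of k] k(1) by (auto simp: exposing_ineq_def)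
qed

lemma facet_normals_independent:
  fixes X :: "'a::euclidean_space set"
  assumes "convex X" "finite T" "card T \<le> 3"
    and T: "\<And>F. F \<in> T \<Longrightarrow> F facet_of X \<and> exposing_ineq X F (n F) (b F) \<and> r \<in> F"
  shows "inj_on n T" "independent (n ` T)"
proof -
  have trivial: "\<forall>F\<in>T. l F = 0" if sum: "(\<Sum>F\<in>T. l F *\<^sub>R n F) = 0" for l
  proof (cases "T = {}")
    case False
    \<comment> \<open>among at most three nonzero coefficients, one of the two signs occurs at most once\<close>
    have "(\<exists>k\<in>T. \<forall>F\<in>T. F \<noteq> k \<longrightarrow> l F \<le> 0) \<or> (\<exists>k\<in>T. \<forall>F\<in>T. F \<noteq> k \<longrightarrow> - l F \<le> 0)"
    proof (rule ccontr)
      assume "\<not> ?thesis"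
      then have pos: "\<And>k. k \<in> T \<Longrightarrow> \<exists>F\<in>T. F \<noteq> k \<and> l F > 0"
        and neg: "\<And>k. k \<in> T \<Longrightarrow> \<exists>F\<in>T. F \<noteq> k \<and> l F < 0"
        by (auto simp: not_le)
      obtain k where "k \<in> T"
        using False by blast
      obtain p1 where p1: "p1 \<in> T" "l p1 > 0"
        using pos[OF \<open>k \<in> T\<close>] by blast
      obtain p2 where p2: "p2 \<in> T" "p2 \<noteq> p1" "l p2 > 0"
        using pos[OF p1(1)] by blast
      obtain q1 where q1: "q1 \<in> T" "l q1 < 0"
        using neg[OF \<open>k \<in> T\<close>] by blast
      obtain q2 where q2: "q2 \<in> T" "q2 \<noteq> q1" "l q2 < 0"
        using neg[OF q1(1)] by blast
      have "p1 \<noteq> q1" "p1 \<noteq> q2" "p2 \<noteq> q1" "p2 \<noteq> q2"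
        using p1 p2 q1 q2 by auto
      then have "card {p1, p2, q1, q2} = 4"
        using p2(2) q2(2) by auto
      moreover have "card {p1, p2, q1, q2} \<le> card T"
        using p1 p2 q1 q2 assms(2) by (intro card_mono) auto
      ultimately show False
        using assms(3) by simp
    qed
    then show ?thesis
    proof
      assume "\<exists>k\<in>T. \<forall>F\<in>T. F \<noteq> k \<longrightarrow> l F \<le> 0"
      then obtain k where "k \<in> T" "\<And>F. F \<in> T \<Longrightarrow> F \<noteq> k \<Longrightarrow> l F \<le> 0"
        by blast
      then show ?thesis
        using facet_normals_one_sided_dependency_trivial[OF assms(1,2) T sum] by blast
    next
      assume "\<exists>k\<in>T. \<forall>F\<in>T. F \<noteq> k \<longrightarrow> - l F \<le> 0"
      then obtain k where "k \<in> T" "\<And>F. F \<in> T \<Longrightarrow> F \<noteq> k \<Longrightarrow> - l F \<le> 0"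
        by blast
      moreover have "(\<Sum>F\<in>T. (- l F) *\<^sub>R n F) = 0"
        using sum by (simp add: sum_negf)
      ultimately have "\<forall>F\<in>T. - l F = 0"
        using facet_normals_one_sided_dependency_trivial[OF assms(1,2) T, where l = "\<lambda>F. - l F"] by blast
      then show ?thesis
        by simp
    qed
  qed simp
  show inj: "inj_on n T"
  proof
    fix F G assume FG: "F \<in> T" "G \<in> T" "n F = n G"
    have "n F \<bullet> r = b F" "n G \<bullet> r = b G"
      using T[OF FG(1)] T[OF FG(2)] exposing_ineq_on_face by blast+
    moreover have "F = X \<inter> {x. n F \<bullet> x = b F}" "G = X \<inter> {x. n G \<bullet> x = b G}"
      using T[OF FG(1)] T[OF FG(2)] unfolding exposing_ineq_def by blast+
    ultimately show "F = G"
      using FG(3) by simp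
  qed
  show "independent (n ` T)"
  proof (rule real_vector.independent_if_scalars_zero)
    fix f w
    assume "(\<Sum>x\<in>n ` T. f x *\<^sub>R x) = 0" "w \<in> n ` T"
    then show "f w = 0"
      using trivial[of "f \<circ> n"] by (auto simp: sum.reindex[OF inj])
  qed (use assms(2) in simp)
qed

definition normal_space :: "'a::euclidean_space set \<Rightarrow> 'a set \<Rightarrow> 'a \<Rightarrow> 'a set" where
  "normal_space X R r = {y \<in> span ((+) (- r) ` X). \<forall>z\<in>R. y \<bullet> z = y \<bullet> r}"

lemma exposing_normal_in_normal_space:
  assumes "exposing_ineq X F a c" "a \<in> span ((+) (- r) ` X)" "R \<subseteq> F" "r \<in> R"
  shows "a \<in> normal_space X R r"
  using assms exposing_ineq_on_face[OF assms(1)] unfolding normal_space_def by auto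

lemma dim_normal_space:
  fixes X R :: "'a::euclidean_space set"
  assumes "R face_of X" "aff_dim R = aff_dim X - 2" "r \<in> R"
  shows "dim (normal_space X R r) = 2"
proof -
  have "R \<subseteq> X"
    using assms(1) face_of_imp_subset by blast
  let ?V = "span ((+) (- r) ` X)" and ?L = "span ((+) (- r) ` R)"
  have "{y \<in> ?V. \<forall>z\<in>R. y \<bullet> z = y \<bullet> r} = {y \<in> ?V. \<forall>x\<in>?L. orthogonal x y}"
  proof -
    have "(\<forall>z\<in>R. y \<bullet> z = y \<bullet> r) \<longleftrightarrow> (\<forall>x\<in>?L. orthogonal x y)" for y
    proof
      assume on_R: "\<forall>z\<in>R. y \<bullet> z = y \<bullet> r"
      have "orthogonal y x" if "x \<in> ?L" for x
      proof (rule orthogonal_to_span[OF that])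
        fix w assume "w \<in> (+) (- r) ` R"
        then show "orthogonal y w"
          using on_R by (auto simp: orthogonal_def inner_diff_right)
      qed
      then show "\<forall>x\<in>?L. orthogonal x y"
        by (simp add: orthogonal_commute)
    next
      assume orth: "\<forall>x\<in>?L. orthogonal x y"
      show "\<forall>z\<in>R. y \<bullet> z = y \<bullet> r"
      proof
        fix z assume "z \<in> R"
        then have "- r + z \<in> ?L"
          by (auto intro: span_base)
        then have "(- r + z) \<bullet> y = 0"
          using orth orthogonal_def by blast
        then show "y \<bullet> z = y \<bullet> r"
          by (simp add: inner_commute inner_diff_right)
      qed
    qed
    then show ?thesis
      by blast
  qed
  moreover have "?L \<subseteq> ?V"
    by (rule span_mono) (use \<open>R \<subseteq> X\<close> in blast)
  then have "dim {y \<in> ?V. \<forall>x\<in>?L. orthogonal x y} + dim ?L = dim ?V"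
    by (rule dim_subspace_orthogonal_to_vectors[OF subspace_span subspace_span])
  moreover have "aff_dim X = dim ?V" "aff_dim R = dim ?L"
    using aff_dim_eq_dim[of r] assms(3) \<open>R \<subseteq> X\<close> by (auto simp: hull_inc)
  ultimately show ?thesis
    using assms(2) by (simp add: normal_space_def)
qed

lemma ridge_in_two_facets:
  fixes X R :: "'a::euclidean_space set"
  assumes X: "polytope X" and R: "R face_of X" "aff_dim R = aff_dim X - 2" "R \<noteq> {}"
  obtains F1 F2 where "F1 \<noteq> F2" "{F. F facet_of X \<and> R \<subseteq> F} = {F1, F2}"
proof -
  have poly: "polyhedron X" and "R \<noteq> X"
    using X R(2) polytope_imp_polyhedron by auto
  obtain F1 where F1: "F1 facet_of X" "R \<subseteq> F1"
    using face_of_polyhedron_subset_facet[OF poly R(1,3) \<open>R \<noteq> X\<close>] .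
  have "{F. F facet_of X \<and> R \<subseteq> F} \<noteq> {F1}"
  proof
    assume "{F. F facet_of X \<and> R \<subseteq> F} = {F1}"
    then have "R = F1"
      using face_of_polyhedron[OF poly R(1,3) \<open>R \<noteq> X\<close>] by simp
    then show False
      using F1(1) R(2) by (simp add: facet_of_def)
  qed
  then obtain F2 where F2: "F2 facet_of X" "R \<subseteq> F2" "F2 \<noteq> F1"
    using F1 by blast
  obtain r where r: "r \<in> R"
    using R(3) by blast
  then obtain n b where nb: "\<And>F. F facet_of X \<Longrightarrow> exposing_ineq X F (n F) (b F) \<and> n F \<in> span ((+) (- r) ` X)"
    using facet_normals_in_span[OF X] R(1) face_of_imp_subset by blast
  have "F = F1 \<or> F = F2" if F: "F facet_of X" "R \<subseteq> F" for F
  proof (rule ccontr)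
    assume other: "\<not> ?thesis"
    let ?T = "{F1, F2, F}"
    have T: "\<And>G. G \<in> ?T \<Longrightarrow> G facet_of X \<and> exposing_ineq X G (n G) (b G) \<and> r \<in> G"
      using F F1 F2 nb r by blast
    have "card ?T = 3"
      using other F2(3) by (auto simp: card_insert_if)
    then have inj: "inj_on n ?T" and indep: "independent (n ` ?T)"
      using facet_normals_independent[OF polytope_imp_convex[OF X] finite.insertI[of "{F2, F}" F1], of n b r] T
      by auto
    \<comment> \<open>three independent normals in the two-dimensional normal space of the ridge\<close>
    have "n G \<in> normal_space X R r" if "G \<in> ?T" for G
    proof (rule exposing_normal_in_normal_space[of X G "n G" "b G" r R])
      show "exposing_ineq X G (n G) (b G)" "n G \<in> span ((+) (- r) ` X)"
        using T[OF that] nb by blast+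
      show "R \<subseteq> G" "r \<in> R"
        using that F F1 F2 r by auto
    qed
    then have "n ` ?T \<subseteq> normal_space X R r"
      by blast
    from independent_card_le_dim[OF this indep] have "card (n ` ?T) \<le> 2"
      unfolding dim_normal_space[OF R(1,2) r] .
    then show False
      using card_image[OF inj] \<open>card ?T = 3\<close> by simp
  qed
  then have "{F. F facet_of X \<and> R \<subseteq> F} = {F1, F2}"
    using F1 F2 by blast
  then show ?thesis
    using that F2(3) by blast
qed

lemma ridge_normal_in_span:
  fixes X R :: "'a::euclidean_space set"
  assumes X: "convex X" and R: "R face_of X" "aff_dim R = aff_dim X - 2" "r \<in> R"
    and F: "F1 facet_of X" "F2 facet_of X" "F1 \<noteq> F2" "R \<subseteq> F1" "R \<subseteq> F2"
    and nb: "\<And>F. F \<in> {F1, F2} \<Longrightarrow> exposing_ineq X F (n F) (b F) \<and> n F \<in> span ((+) (- r) ` X)"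
    and a: "a \<in> normal_space X R r"
  shows "a \<in> span {n F1, n F2}"
proof -
  let ?N = "normal_space X R r"
  let ?T = "{F1, F2}"
  have T: "\<And>G. G \<in> ?T \<Longrightarrow> G facet_of X \<and> exposing_ineq X G (n G) (b G) \<and> r \<in> G"
    using F nb R(3) by blast
  have inj: "inj_on n ?T" and indep: "independent (n ` ?T)"
    using facet_normals_independent[OF X finite.insertI[of "{F2}" F1], of n b r] T F(3) by auto
  have "n G \<in> ?N" if "G \<in> ?T" for G
  proof (rule exposing_normal_in_normal_space[of X G "n G" "b G" r R])
    show "exposing_ineq X G (n G) (b G)" "n G \<in> span ((+) (- r) ` X)"
      using nb[OF that] by blast+
    show "R \<subseteq> G" "r \<in> R"
      using that F R(3) by auto
  qed
  then have "n ` ?T \<subseteq> ?N"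
    by blast
  moreover have "card (n ` ?T) = dim ?N"
    using card_image[OF inj] F(3) dim_normal_space[OF R] by simp
  ultimately have "?N \<subseteq> span (n ` ?T)"
    using card_eq_dim[of "n ` ?T" ?N] indep by blast
  then show ?thesis
    using a by auto
qed

section \<open>Facet inequalities of full-dimensional polytopes\<close>

lemma hyperplane_eq_imp_proportional:
  fixes a a' :: "'a::euclidean_space"
  assumes "a \<noteq> 0" "{x. a \<bullet> x = b} = {x. a' \<bullet> x = b'}"
  obtains c where "a' = c *\<^sub>R a" "b' = c * b"
proof -
  define x0 where "x0 = (b / (a \<bullet> a)) *\<^sub>R a"
  have "a \<bullet> x0 = b"
    using assms(1) by (simp add: x0_def)
  then have x0: "a \<bullet> x0 = b" "a' \<bullet> x0 = b'"
    using assms(2) by blast+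
  define c where "c = (a' \<bullet> a) / (a \<bullet> a)"
  define w where "w = a' - c *\<^sub>R a"
  have "a \<bullet> w = 0"
    using assms(1) by (simp add: w_def c_def inner_diff_right inner_commute)
  then have "a \<bullet> (x0 + w) = b"
    using x0 by (simp add: inner_add_right)
  then have "a' \<bullet> (x0 + w) = b'"
    using assms(2) by blast
  then have "a' \<bullet> w = 0"
    using x0 by (simp add: inner_add_right)
  moreover have "w \<bullet> w = a' \<bullet> w - c * (a \<bullet> w)"
    by (simp add: w_def inner_diff_left)
  ultimately have "w = 0"
    using \<open>a \<bullet> w = 0\<close> by simp
  then have "a' = c *\<^sub>R a"
    by (simp add: w_def)
  moreover have "b' = c * b"
    using x0 calculation by simp
  ultimately show ?thesis
    using that by blast
qed

lemma affine_hull_facet_full_dim: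
  fixes P F :: "'a::euclidean_space set"
  assumes "aff_dim P = DIM('a)" "F facet_of P" "exposing_ineq P F a b"
  shows "affine hull F = {x. a \<bullet> x = b}"
proof (rule affine_dim_equal)
  show "affine hull F \<subseteq> {x. a \<bullet> x = b}"
    using assms(3) by (intro hull_minimal) (auto simp: exposing_ineq_def affine_hyperplane)
  show "aff_dim (affine hull F) = aff_dim {x. a \<bullet> x = b}"
    using assms by (simp add: facet_of_def exposing_ineq_def)
qed (use assms(2) in \<open>auto simp: facet_of_def affine_hyperplane\<close>)

lemma exposing_ineq_facet_unique:
  fixes P F :: "'a::euclidean_space set"
  assumes "aff_dim P = DIM('a)" "F facet_of P" "exposing_ineq P F n b"
    and "a \<noteq> 0" "P \<subseteq> {x. a \<bullet> x \<le> c}" "F \<subseteq> {x. a \<bullet> x = c}"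
  obtains t where "t > 0" "a = t *\<^sub>R n" "c = t * b"
proof -
  have "{x. n \<bullet> x = b} = {x. a \<bullet> x = c}"
  proof (rule affine_dim_equal)
    show "{x. n \<bullet> x = b} \<subseteq> {x. a \<bullet> x = c}"
      unfolding affine_hull_facet_full_dim[OF assms(1-3), symmetric]
      using assms(6) by (intro hull_minimal) (auto simp: affine_hyperplane)
    show "{x. n \<bullet> x = b} \<noteq> {}"
      using assms(3) hyperplane_eq_empty unfolding exposing_ineq_def by blast
  qed (use assms(3,4) in \<open>auto simp: exposing_ineq_def affine_hyperplane\<close>)
  then obtain t where t: "a = t *\<^sub>R n" "c = t * b"
    using hyperplane_eq_imp_proportional assms(3) unfolding exposing_ineq_def by metis
  have "\<not> P \<subseteq> {x. n \<bullet> x = b}"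
    using assms(2,3) unfolding exposing_ineq_def by (metis facet_of_irrefl inf.absorb1)
  then obtain p where p: "p \<in> P" "n \<bullet> p < b"
    using assms(3) unfolding exposing_ineq_def by force
  have "t * (n \<bullet> p - b) \<le> 0"
    using assms(5) p(1) t by (auto simp: right_diff_distrib)
  then have "t > 0"
    using p(2) t assms(4) by (auto simp: mult_le_0_iff)
  then show ?thesis
    using that t by blast
qed

lemma hplus_hminus_exposing_ineq:
  fixes P F :: "'a::euclidean_space set"
  assumes "aff_dim P = DIM('a)" "F facet_of P" "exposing_ineq P F n b"
  shows "x \<in> hplus P F \<Longrightarrow> n \<bullet> x < b" and "x \<in> hminus P F \<Longrightarrow> b < n \<bullet> x"
proof -
  \<comment> \<open>the orientation in the definitions of the sides is the opposite of the exposing inequality\<close>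
  have inner: "\<exists>t>0. a = - t *\<^sub>R n \<and> l = - t * b"
    if "a \<noteq> 0" "affine hull F = {y. a \<bullet> y = l}" "P \<subseteq> {y. a \<bullet> y \<ge> l}" for a l
  proof -
    have "- a \<noteq> 0" "P \<subseteq> {y. (- a) \<bullet> y \<le> - l}" "F \<subseteq> {y. (- a) \<bullet> y = - l}"
      using that hull_subset[of F affine] by auto
    then obtain t where "t > 0" "- a = t *\<^sub>R n" "- l = t * b"
      by (rule exposing_ineq_facet_unique[OF assms])
    then show ?thesis
      by (metis minus_minus mult_minus_left scaleR_minus_left)
  qed
  show "n \<bullet> x < b" if "x \<in> hplus P F"
    using that inner unfolding hplus_def by (force simp: mult_less_cancel_left_pos)
  show "b < n \<bullet> x" if "x \<in> hminus P F"
    using that inner unfolding hminus_def by (force simp: mult_less_cancel_left_pos)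
qed

lemma span_translate_full_dim:
  fixes P :: "'a::euclidean_space set"
  assumes "aff_dim P = DIM('a)" "r \<in> P"
  shows "span ((+) (- r) ` P) = UNIV"
proof -
  have "dim ((+) (- r) ` P) = DIM('a)"
    using aff_dim_eq_dim[OF hull_inc[OF assms(2)]] assms(1) by simp
  then show ?thesis
    by (metis dim_eq_full)
qed

lemma exposing_ineq_positive_combination:
  assumes "exposing_ineq P F1 n1 b1" "exposing_ineq P F2 n2 b2" "\<alpha> > 0" "\<beta> > 0"
  shows "P \<subseteq> {x. (\<alpha> *\<^sub>R n1 + \<beta> *\<^sub>R n2) \<bullet> x \<le> \<alpha> * b1 + \<beta> * b2}"
    and "P \<inter> {x. (\<alpha> *\<^sub>R n1 + \<beta> *\<^sub>R n2) \<bullet> x = \<alpha> * b1 + \<beta> * b2} = F1 \<inter> F2"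
proof -
  have slack: "(\<alpha> *\<^sub>R n1 + \<beta> *\<^sub>R n2) \<bullet> x - (\<alpha> * b1 + \<beta> * b2)
      = \<alpha> * (n1 \<bullet> x - b1) + \<beta> * (n2 \<bullet> x - b2)" for x
    by (simp add: algebra_simps)
  have nonpos: "\<alpha> * (n1 \<bullet> x - b1) \<le> 0" "\<beta> * (n2 \<bullet> x - b2) \<le> 0" if "x \<in> P" for x
    using assms that unfolding exposing_ineq_def by (auto intro!: mult_nonneg_nonpos)
  show "P \<subseteq> {x. (\<alpha> *\<^sub>R n1 + \<beta> *\<^sub>R n2) \<bullet> x \<le> \<alpha> * b1 + \<beta> * b2}"
  proof
    fix x assume "x \<in> P"
    then show "x \<in> {x. (\<alpha> *\<^sub>R n1 + \<beta> *\<^sub>R n2) \<bullet> x \<le> \<alpha> * b1 + \<beta> * b2}"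
      using slack[of x] nonpos[of x] by simp
  qed
  have "x \<in> F1 \<inter> F2" if "x \<in> P" "(\<alpha> *\<^sub>R n1 + \<beta> *\<^sub>R n2) \<bullet> x = \<alpha> * b1 + \<beta> * b2" for x
  proof -
    have "\<alpha> * (n1 \<bullet> x - b1) + \<beta> * (n2 \<bullet> x - b2) = 0"
      using slack[of x] that(2) by simp
    then have "\<alpha> * (n1 \<bullet> x - b1) = 0" "\<beta> * (n2 \<bullet> x - b2) = 0"
      using nonpos[OF that(1)] by (simp_all add: add_nonpos_eq_0_iff)
    then show ?thesis
      using assms that(1) unfolding exposing_ineq_def by simp
  qed
  moreover have "(\<alpha> *\<^sub>R n1 + \<beta> *\<^sub>R n2) \<bullet> x = \<alpha> * b1 + \<beta> * b2" if "x \<in> F1 \<inter> F2" for x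
  proof -
    have "n1 \<bullet> x = b1" "n2 \<bullet> x = b2"
      using that assms(1,2) exposing_ineq_on_face by blast+
    then show ?thesis
      using slack[of x] by simp
  qed
  ultimately show "P \<inter> {x. (\<alpha> *\<^sub>R n1 + \<beta> *\<^sub>R n2) \<bullet> x = \<alpha> * b1 + \<beta> * b2} = F1 \<inter> F2"
    using assms(1) unfolding exposing_ineq_def by blast
qed

lemma supporting_ridge_coefficient_pos:
  fixes P :: "'a::euclidean_space set"
  assumes "convex P" "F1 facet_of P" "F2 facet_of P" "F1 \<noteq> F2"
    and "exposing_ineq P F1 n1 b1" "exposing_ineq P F2 n2 b2"
    and "P \<subseteq> {x. a \<bullet> x \<le> c}" "P \<inter> {x. a \<bullet> x = c} \<subseteq> F2"
    and combination: "\<And>x. a \<bullet> x - c = \<alpha> * (n1 \<bullet> x - b1) + \<beta> * (n2 \<bullet> x - b2)"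
  shows "\<beta> > 0"
proof -
  obtain p where p: "p \<in> F1" "p \<notin> F2"
    using facet_of_subset_eq[OF assms(1,2,3)] assms(4) by blast
  then have "p \<in> P"
    using assms(2) facet_of_imp_subset by blast
  then have "a \<bullet> p - c < 0" "n2 \<bullet> p - b2 < 0"
    using p(2) assms(6-8) unfolding exposing_ineq_def by force+
  moreover have "n1 \<bullet> p - b1 = 0"
    using p(1) assms(5) exposing_ineq_on_face by fastforce
  ultimately show ?thesis
    using combination[of p] by (simp add: mult_less_0_iff)
qed

section \<open>Facets adjacent to a facet\<close>

lemma bij_betw_adj_facets_of_facet:
  fixes P S :: "'a::euclidean_space set"
  assumes P: "d_polytope P" and d: "DIM('a) \<ge> 2" and S: "S facet_of P"
  shows "bij_betw (\<lambda>F. F \<inter> S) (adj P S) {R. R facet_of S}"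
proof -
  have poly: "polytope P" "convex P" and full: "aff_dim P = DIM('a)"
    using P polytope_imp_convex unfolding d_polytope_def by auto
  have dim_S: "aff_dim S = int DIM('a) - 1"
    using S full by (simp add: facet_of_def)
  have ridge: "F \<inter> S face_of P \<and> aff_dim (F \<inter> S) = int DIM('a) - 2 \<and> F \<inter> S \<noteq> {}"
    if adj_F: "F \<in> adj P S" for F
  proof -
    have F: "F facet_of P" "S \<noteq> F"
      using adj_F unfolding adj_def adjacent_def by auto
    obtain R where R: "R face_of P" "aff_dim R = int DIM('a) - 2" "R \<subseteq> S \<inter> F"
      using adj_F unfolding adj_def adjacent_def by blast
    moreover have "aff_dim R = aff_dim P - 2" "R \<subseteq> F \<inter> S"
      using R(2,3) full by auto
    ultimately have "F \<inter> S = R"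
      using facet_Int_facet_eq_ridge[OF poly(2) F(1) S F(2)[symmetric]] by blast
    moreover have "R \<noteq> {}"
      using R(2) d by auto
    ultimately show ?thesis
      using R by simp
  qed
  show ?thesis
  proof (rule bij_betw_imageI)
    show "inj_on (\<lambda>F. F \<inter> S) (adj P S)"
    proof
      fix F F' assume FF': "F \<in> adj P S" "F' \<in> adj P S" "F \<inter> S = F' \<inter> S"
      obtain F1 F2 where two: "{G. G facet_of P \<and> F \<inter> S \<subseteq> G} = {F1, F2}"
        using ridge_in_two_facets[OF poly(1)] ridge[OF FF'(1)] full by metis
      have "F facet_of P" "F' facet_of P" "F \<noteq> S" "F' \<noteq> S"
        using FF'(1,2) unfolding adj_def adjacent_def by auto
      then have "F \<in> {F1, F2}" "F' \<in> {F1, F2}" "S \<in> {F1, F2}"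
        using S FF'(3) unfolding two[symmetric] by auto
      then show "F = F'"
        using \<open>F \<noteq> S\<close> \<open>F' \<noteq> S\<close> by auto
    qed
    show "(\<lambda>F. F \<inter> S) ` adj P S = {R. R facet_of S}"
    proof
      show "(\<lambda>F. F \<inter> S) ` adj P S \<subseteq> {R. R facet_of S}"
        using ridge face_of_subset[of _ P S] facet_of_imp_subset[OF S] dim_S
        by (auto simp: facet_of_def)
      show "{R. R facet_of S} \<subseteq> (\<lambda>F. F \<inter> S) ` adj P S"
      proof
        fix R assume "R \<in> {R. R facet_of S}"
        then have R: "R face_of P" "aff_dim R = int DIM('a) - 2" "R \<noteq> {}" "R \<subseteq> S"
          using face_of_trans[OF facet_of_imp_face_of facet_of_imp_face_of[OF S]] dim_S
          by (auto simp: facet_of_def dest: face_of_imp_subset)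
        obtain F1 F2 where "F1 \<noteq> F2" "{G. G facet_of P \<and> R \<subseteq> G} = {F1, F2}"
          using ridge_in_two_facets[OF poly(1) R(1) _ R(3)] R(2) full by auto
        then obtain F where F: "F facet_of P" "F \<noteq> S" "R \<subseteq> F"
          by (metis (mono_tags, lifting) insertCI mem_Collect_eq)
        then have "F \<in> adj P S"
          using S R unfolding adj_def adjacent_def by blast
        moreover have "F \<inter> S = R"
          using facet_Int_facet_eq_ridge[OF poly(2) F(1) S F(2) R(1)] R(2,4) F(3) full by auto
        ultimately show "R \<in> (\<lambda>F. F \<inter> S) ` adj P S"
          by blast
      qed
    qed
  qed
qed

lemma card_adj_containing_subridge:
  fixes P S G :: "'a::euclidean_space set"
  assumes P: "d_polytope P" and d: "DIM('a) \<ge> 3" and S: "S facet_of P"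
    and G: "G face_of P" "aff_dim G = int DIM('a) - 3" "G \<subseteq> S"
  shows "card {F \<in> adj P S. G \<subseteq> F} = 2"
proof -
  have "polytope S" and dim_S: "aff_dim S = int DIM('a) - 1"
    using P S face_of_polytope_polytope facet_of_imp_face_of unfolding d_polytope_def
    by (auto simp: facet_of_def)
  moreover have "G face_of S" "G \<noteq> {}"
    using G face_of_subset facet_of_imp_subset[OF S] d by auto
  ultimately obtain R1 R2 where R: "R1 \<noteq> R2" "{R. R facet_of S \<and> G \<subseteq> R} = {R1, R2}"
    using ridge_in_two_facets[of S G] G(2) by auto
  have bij: "bij_betw (\<lambda>F. F \<inter> S) (adj P S) {R. R facet_of S}"
    using bij_betw_adj_facets_of_facet[OF P _ S] d by simp
  have "bij_betw (\<lambda>F. F \<inter> S) {F \<in> adj P S. G \<subseteq> F} {R \<in> {R. R facet_of S}. G \<subseteq> R}"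
    by (rule bij_betw_Collect[OF bij]) (use G(3) in blast)
  then show ?thesis
    using R by (simp add: bij_betw_same_card)
qed

section \<open>Adding a point beyond a single facet\<close>

(* The assumptions on v express v \<in> VS S \<F> {} P; the facet inequalities n F \<bullet> x \<le> b F are
   oriented opposite to hplus and hminus. *)
locale beyond_facet =
  fixes P S :: "'a::euclidean_space set" and \<F> :: "'a set set" and v :: 'a
    and n :: "'a set \<Rightarrow> 'a" and b :: "'a set \<Rightarrow> real"
  assumes d_polytope: "d_polytope P" and dim_ge_2: "DIM('a) \<ge> 2"
    and exposing: "\<And>F. F facet_of P \<Longrightarrow> exposing_ineq P F (n F) (b F)"
    and facet_S: "S facet_of P" and adj_\<F>: "\<F> \<subseteq> adj P S"
    and beyond_S: "b S < n S \<bullet> v"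
    and on_\<F>: "\<And>F. F \<in> \<F> \<Longrightarrow> n F \<bullet> v = b F"
    and beneath_others: "\<And>F. F facet_of P \<Longrightarrow> F \<noteq> S \<Longrightarrow> F \<notin> \<F> \<Longrightarrow> n F \<bullet> v < b F"
begin

abbreviation Q :: "'a set" where
  "Q \<equiv> convex hull (insert v P)"

definition beneath_facets :: "'a set set" where
  "beneath_facets = {F. F facet_of P \<and> F \<noteq> S \<and> F \<notin> \<F>}"

definition horizon_ridges :: "'a set set" where
  "horizon_ridges = (\<lambda>F. F \<inter> S) ` (adj P S - \<F>)"

lemma polytope_P: "polytope P" and convex_P: "convex P" and aff_dim_P: "aff_dim P = DIM('a)"
  using d_polytope polytope_imp_convex unfolding d_polytope_def by auto

lemma facet_of_P_aff_dim: "F facet_of P \<Longrightarrow> aff_dim F = int DIM('a) - 1"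
  using aff_dim_P by (simp add: facet_of_def)

lemma facet_\<F>: "F \<in> \<F> \<Longrightarrow> F facet_of P \<and> F \<noteq> S"
  using adj_\<F> unfolding adj_def adjacent_def by auto

lemma not_beyond: "F facet_of P \<Longrightarrow> F \<noteq> S \<Longrightarrow> n F \<bullet> v \<le> b F"
  using on_\<F> beneath_others by fastforce

lemma polytope_Q: "polytope Q"
proof -
  obtain V where "finite V" "P = convex hull V"
    using polytope_P unfolding polytope_def by blast
  then have "Q = convex hull (insert v V)"
    by (metis hull_insert)
  then show ?thesis
    using \<open>finite V\<close> unfolding polytope_def by blast
qed

lemma P_subset_Q: "P \<subseteq> Q"
  by (meson hull_subset subset_insertI subset_trans)

lemma aff_dim_Q: "aff_dim Q = DIM('a)"
  using aff_dim_subset[OF P_subset_Q] aff_dim_P aff_dim_le_DIM[of Q] by linarith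

lemma facet_of_Q_iff: "E facet_of Q \<longleftrightarrow> E face_of Q \<and> E \<noteq> {} \<and> aff_dim E = int DIM('a) - 1"
  using aff_dim_Q by (simp add: facet_of_def)

lemma supporting_hyperplane_Q:
  assumes "P \<subseteq> {x. a \<bullet> x \<le> c}" "a \<bullet> v \<le> c"
  shows "Q \<subseteq> {x. a \<bullet> x \<le> c}" and "Q \<inter> {x. a \<bullet> x = c} face_of Q"
    and "Q \<inter> {x. a \<bullet> x = c} = convex hull (insert v P \<inter> {x. a \<bullet> x = c})"
proof -
  show Q: "Q \<subseteq> {x. a \<bullet> x \<le> c}"
    using assms by (intro hull_minimal) (auto simp: convex_halfspace_le)
  show "Q \<inter> {x. a \<bullet> x = c} face_of Q"
    using Q by (intro face_of_Int_supporting_hyperplane_le) auto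
  show "Q \<inter> {x. a \<bullet> x = c} = convex hull (insert v P \<inter> {x. a \<bullet> x = c})"
    using assms by (intro convex_hull_Int_supporting_hyperplane) auto
qed

lemma beneath_facet_of_Q:
  assumes "F \<in> beneath_facets"
  shows "F facet_of Q"
proof -
  have F: "F facet_of P" "n F \<bullet> v < b F"
    using assms beneath_others unfolding beneath_facets_def by auto
  note ineq = exposing[OF F(1), unfolded exposing_ineq_def]
  have "Q \<inter> {x. n F \<bullet> x = b F} = convex hull F"
    using supporting_hyperplane_Q(3)[of "n F" "b F"] ineq F(2) by auto
  also have "\<dots> = F"
    using F(1) face_of_imp_convex facet_of_imp_face_of convex_hull_eq by blast
  finally have "F face_of Q"
    using supporting_hyperplane_Q(2)[of "n F" "b F"] ineq F(2) by auto
  moreover have "F \<noteq> {}" "aff_dim F = int DIM('a) - 1"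
    using F(1) facet_of_P_aff_dim by (auto simp: facet_of_def)
  ultimately show ?thesis
    by (simp add: facet_of_Q_iff)
qed

lemma pyramid_facet_of_Q:
  assumes "P \<subseteq> {x. a \<bullet> x \<le> c}" "a \<bullet> v = c"
    and "aff_dim (convex hull (insert v (P \<inter> {x. a \<bullet> x = c}))) = int DIM('a) - 1"
  shows "convex hull (insert v (P \<inter> {x. a \<bullet> x = c})) facet_of Q"
    and "P \<inter> convex hull (insert v (P \<inter> {x. a \<bullet> x = c})) = P \<inter> {x. a \<bullet> x = c}"
proof -
  have eq: "Q \<inter> {x. a \<bullet> x = c} = convex hull (insert v (P \<inter> {x. a \<bullet> x = c}))"
    using supporting_hyperplane_Q(3)[OF assms(1)] assms(2) by (simp add: Int_insert_left)
  then show "convex hull (insert v (P \<inter> {x. a \<bullet> x = c})) facet_of Q"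
    using supporting_hyperplane_Q(2)[OF assms(1)] assms(2,3) by (auto simp: facet_of_Q_iff)
  show "P \<inter> convex hull (insert v (P \<inter> {x. a \<bullet> x = c})) = P \<inter> {x. a \<bullet> x = c}"
    using P_subset_Q unfolding eq[symmetric] by blast
qed

lemma horizon_ridge_facet_of_S: "R \<in> horizon_ridges \<Longrightarrow> R facet_of S"
  using bij_betw_imp_surj_on[OF bij_betw_adj_facets_of_facet[OF d_polytope dim_ge_2 facet_S]]
  unfolding horizon_ridges_def by blast

lemma aff_dim_horizon_ridge: "R \<in> horizon_ridges \<Longrightarrow> aff_dim R = int DIM('a) - 2"
  using horizon_ridge_facet_of_S facet_of_P_aff_dim[OF facet_S] by (simp add: facet_of_def)

lemma on_pyramid_facet_of_Q:
  assumes "F \<in> \<F>"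
  shows "convex hull (insert v F) facet_of Q" "P \<inter> convex hull (insert v F) = F"
proof -
  have F: "F facet_of P" "exposing_ineq P F (n F) (b F)"
    using assms facet_\<F> exposing by auto
  then have "P \<inter> {x. n F \<bullet> x = b F} = F" "P \<subseteq> {x. n F \<bullet> x \<le> b F}"
    unfolding exposing_ineq_def by auto
  moreover have "v \<in> affine hull F"
    using affine_hull_facet_full_dim[OF aff_dim_P F] on_\<F>[OF assms] by simp
  then have "aff_dim (convex hull (insert v F)) = int DIM('a) - 1"
    using facet_of_P_aff_dim[OF F(1)] by (simp add: aff_dim_convex_hull aff_dim_insert)
  ultimately show "convex hull (insert v F) facet_of Q" "P \<inter> convex hull (insert v F) = F"
    using pyramid_facet_of_Q[of "n F" "b F"] on_\<F>[OF assms] by auto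
qed

lemma horizon_pyramid_facet_of_Q:
  assumes "R \<in> horizon_ridges"
  shows "convex hull (insert v R) facet_of Q" "P \<inter> convex hull (insert v R) = R"
proof -
  obtain F where F: "F \<in> adj P S" "F \<notin> \<F>" "R = F \<inter> S"
    using assms unfolding horizon_ridges_def by blast
  then have "F facet_of P" "F \<noteq> S"
    unfolding adj_def adjacent_def by auto
  then have F_beneath: "n F \<bullet> v < b F"
    using beneath_others F(2) by blast
  \<comment> \<open>tilt the hyperplane of S about the ridge until it passes through v\<close>
  define \<alpha> where "\<alpha> = b F - n F \<bullet> v"
  define \<beta> where "\<beta> = n S \<bullet> v - b S"
  have "\<alpha> > 0" "\<beta> > 0"
    using F_beneath beyond_S by (auto simp: \<alpha>_def \<beta>_def)
  then have "P \<subseteq> {x. (\<alpha> *\<^sub>R n S + \<beta> *\<^sub>R n F) \<bullet> x \<le> \<alpha> * b S + \<beta> * b F}"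
    and "P \<inter> {x. (\<alpha> *\<^sub>R n S + \<beta> *\<^sub>R n F) \<bullet> x = \<alpha> * b S + \<beta> * b F} = R"
    using exposing_ineq_positive_combination[OF exposing[OF facet_S] exposing[OF \<open>F facet_of P\<close>]] F(3)
    by auto
  moreover have "(\<alpha> *\<^sub>R n S + \<beta> *\<^sub>R n F) \<bullet> v = \<alpha> * b S + \<beta> * b F"
    by (simp add: \<alpha>_def \<beta>_def algebra_simps)
  moreover have "v \<notin> affine hull R"
  proof
    assume "v \<in> affine hull R"
    moreover have "affine hull R \<subseteq> affine hull S"
      using F(3) by (intro hull_mono) blast
    ultimately show False
      using affine_hull_facet_full_dim[OF aff_dim_P facet_S exposing[OF facet_S]] beyond_S by auto
  qed
  then have "aff_dim (convex hull (insert v R)) = int DIM('a) - 1"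
    using aff_dim_horizon_ridge[OF assms] by (simp add: aff_dim_convex_hull aff_dim_insert)
  ultimately show "convex hull (insert v R) facet_of Q" "P \<inter> convex hull (insert v R) = R"
    using pyramid_facet_of_Q[of "\<alpha> *\<^sub>R n S + \<beta> *\<^sub>R n F" "\<alpha> * b S + \<beta> * b F"] by auto
qed

lemma ridge_base_facets_not_on:
  assumes E: "E facet_of Q" "E = convex hull (insert v (P \<inter> E))"
    and dim: "aff_dim (P \<inter> E) = int DIM('a) - 2"
    and F: "F facet_of P" "P \<inter> E \<subseteq> F"
  shows "n F \<bullet> v \<noteq> b F"
proof
  assume on: "n F \<bullet> v = b F"
  note ineq = exposing[OF F(1), unfolded exposing_ineq_def]
  let ?E' = "Q \<inter> {x. n F \<bullet> x = b F}"
  have "?E' face_of Q"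
    using supporting_hyperplane_Q(2)[of "n F" "b F"] ineq on by auto
  moreover have "?E' \<noteq> Q"
    using P_subset_Q ineq F(1) by (metis facet_of_irrefl inf.absorb_iff1 le_inf_iff)
  moreover have "E \<subseteq> ?E'"
  proof -
    have "insert v (P \<inter> E) \<subseteq> {x. n F \<bullet> x = b F}"
      using F(2) ineq on by blast
    then have "E \<subseteq> {x. n F \<bullet> x = b F}"
      using E(2) by (metis convex_hyperplane hull_minimal)
    then show ?thesis
      using E(1) facet_of_imp_subset by blast
  qed
  \<comment> \<open>the facet E would lie in the proper face cut out by the hyperplane of F\<close>
  ultimately have "E = ?E'"
    using facet_of_subset_face_eq[OF _ E(1)] by blast
  then have "P \<inter> E = F"
    using P_subset_Q ineq by blast
  then show False
    using dim facet_of_P_aff_dim[OF F(1)] by simp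
qed

lemma ridge_ineq_positive_combination:
  assumes P_le: "P \<subseteq> {x. a \<bullet> x \<le> c}" and K: "K = P \<inter> {x. a \<bullet> x = c}"
    and dim_K: "aff_dim K = int DIM('a) - 2"
    and F12: "F1 \<noteq> F2" "{F. F facet_of P \<and> K \<subseteq> F} = {F1, F2}"
  shows "\<exists>\<alpha> \<beta>. \<alpha> > 0 \<and> \<beta> > 0 \<and> (\<forall>x. a \<bullet> x - c = \<alpha> * (n F1 \<bullet> x - b F1) + \<beta> * (n F2 \<bullet> x - b F2))"
proof -
  have F: "F1 facet_of P" "F2 facet_of P" "K \<subseteq> F1" "K \<subseteq> F2"
    using F12(2) by blast+
  have K_face: "K face_of P"
    unfolding K using P_le by (intro face_of_Int_supporting_hyperplane_le convex_P) auto
  have dim_K': "aff_dim K = aff_dim P - 2"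
    using dim_K aff_dim_P by simp
  obtain r where r: "r \<in> K"
    using dim_K dim_ge_2 by fastforce
  then have span: "span ((+) (- r) ` P) = UNIV"
    using K span_translate_full_dim[OF aff_dim_P] by blast
  have "a \<in> normal_space P K r"
    using r K span unfolding normal_space_def by auto
  moreover have "\<And>F. F \<in> {F1, F2} \<Longrightarrow> exposing_ineq P F (n F) (b F) \<and> n F \<in> span ((+) (- r) ` P)"
    using exposing F span by auto
  ultimately have "a \<in> span {n F1, n F2}"
    using ridge_normal_in_span[OF convex_P K_face dim_K' r F(1,2) F12(1) F(3,4)] by blast
  then obtain \<alpha> \<beta> where a: "a = \<alpha> *\<^sub>R n F1 + \<beta> *\<^sub>R n F2"
    by (auto simp: span_insert span_singleton) (metis diff_eq_eq add.commute)
  have "n F1 \<bullet> r = b F1" "n F2 \<bullet> r = b F2"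
    using r F exposing exposing_ineq_on_face by blast+
  moreover have "a \<bullet> r = c"
    using r K by blast
  ultimately have "c = \<alpha> * b F1 + \<beta> * b F2"
    by (simp add: a inner_add_left)
  then have slack: "a \<bullet> x - c = \<alpha> * (n F1 \<bullet> x - b F1) + \<beta> * (n F2 \<bullet> x - b F2)" for x
    by (simp add: a algebra_simps)
  moreover have "P \<inter> {x. a \<bullet> x = c} \<subseteq> F1" "P \<inter> {x. a \<bullet> x = c} \<subseteq> F2"
    using K F by blast+
  then have "\<alpha> > 0" "\<beta> > 0"
    using supporting_ridge_coefficient_pos[OF convex_P F(2,1) F12(1)[symmetric] exposing[OF F(2)] exposing[OF F(1)] P_le,
        of \<beta> \<alpha>]
      supporting_ridge_coefficient_pos[OF convex_P F(1,2) F12(1) exposing[OF F(1)] exposing[OF F(2)] P_le,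
        of \<alpha> \<beta>]
      slack by (simp_all add: add.commute)
  ultimately show ?thesis
    by blast
qed

lemma ridge_base_in_horizon:
  assumes E: "E facet_of Q" "E = Q \<inter> {x. a \<bullet> x = c}"
    and supp: "Q \<subseteq> {x. a \<bullet> x \<le> c}" "a \<bullet> v = c"
    and dim: "aff_dim (P \<inter> E) = int DIM('a) - 2"
  shows "P \<inter> E \<in> horizon_ridges"
proof -
  define K where "K = P \<inter> E"
  have K: "K = P \<inter> {x. a \<bullet> x = c}"
    using E(2) P_subset_Q by (auto simp: K_def)
  have P_le: "P \<subseteq> {x. a \<bullet> x \<le> c}"
    using supp(1) P_subset_Q by blast
  have E_pyramid: "E = convex hull (insert v K)"
    using supporting_hyperplane_Q(3)[OF P_le] supp(2) E(2) K by (simp add: Int_insert_left)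
  have K_face: "K face_of P"
    unfolding K using P_le by (intro face_of_Int_supporting_hyperplane_le convex_P) auto
  moreover have dim_K: "aff_dim K = aff_dim P - 2" "K \<noteq> {}"
    using dim dim_ge_2 aff_dim_P by (auto simp: K_def)
  ultimately obtain F1 F2 where F12: "F1 \<noteq> F2" "{F. F facet_of P \<and> K \<subseteq> F} = {F1, F2}"
    by (rule ridge_in_two_facets[OF polytope_P])
  then have F: "F1 facet_of P" "F2 facet_of P" "K \<subseteq> F1" "K \<subseteq> F2"
    by blast+
  obtain \<alpha> \<beta> where "\<alpha> > 0" "\<beta> > 0"
    and slack: "\<And>x. a \<bullet> x - c = \<alpha> * (n F1 \<bullet> x - b F1) + \<beta> * (n F2 \<bullet> x - b F2)"
    using ridge_ineq_positive_combination[OF P_le K dim[folded K_def] F12] by blast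
  have not_on: "n F \<bullet> v \<noteq> b F" if "F \<in> {F1, F2}" for F
    using ridge_base_facets_not_on[OF E(1)] E_pyramid dim F that unfolding K_def by blast
  \<comment> \<open>v lies on the hyperplane of E, so it cannot be strictly beneath both facets through K\<close>
  have "S \<in> {F1, F2}"
  proof (rule ccontr)
    assume "S \<notin> {F1, F2}"
    then have "n F1 \<bullet> v - b F1 < 0" "n F2 \<bullet> v - b F2 < 0"
      using not_beyond not_on F by (auto simp: order.order_iff_strict)
    then show False
      using slack[of v] supp(2) \<open>\<alpha> > 0\<close> \<open>\<beta> > 0\<close> by (smt (verit) mult_pos_neg)
  qed
  then have "K \<subseteq> S"
    using F by blast
  obtain F where "F \<in> {F1, F2}" "F \<noteq> S"
    using F12(1) by blast
  then have "F facet_of P" "F \<noteq> S" "K \<subseteq> F" "F \<notin> \<F>"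
    using F not_on on_\<F> by blast+
  moreover from this have "F \<in> adj P S"
    using facet_S K_face dim_K \<open>K \<subseteq> S\<close> aff_dim_P unfolding adj_def adjacent_def by auto
  moreover have "F \<inter> S = K"
    using facet_Int_facet_eq_ridge[OF convex_P _ facet_S _ K_face dim_K(1)] calculation \<open>K \<subseteq> S\<close> by blast
  ultimately show ?thesis
    unfolding horizon_ridges_def K_def by blast
qed

lemma facet_supporting_sign:
  assumes "K facet_of P" "a \<noteq> 0" "P \<subseteq> {x. a \<bullet> x \<le> c}" "K \<subseteq> {x. a \<bullet> x = c}"
  shows "sgn (a \<bullet> v - c) = sgn (n K \<bullet> v - b K)"
proof -
  obtain t where "t > 0" "a = t *\<^sub>R n K" "c = t * b K"
    using exposing_ineq_facet_unique[OF aff_dim_P assms(1) exposing[OF assms(1)] assms(2-4)] .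
  then have "a \<bullet> v - c = t * (n K \<bullet> v - b K)"
    by (simp add: algebra_simps)
  then show ?thesis
    using \<open>t > 0\<close> by (simp add: sgn_mult)
qed

lemma facet_of_Q_off_v:
  assumes "E facet_of Q" "E = Q \<inter> {x. a \<bullet> x = c}" "Q \<subseteq> {x. a \<bullet> x \<le> c}" "a \<noteq> 0" "a \<bullet> v < c"
  shows "P \<inter> E \<in> beneath_facets" "E = P \<inter> E"
proof -
  have P_le: "P \<subseteq> {x. a \<bullet> x \<le> c}" and PE: "P \<inter> E = P \<inter> {x. a \<bullet> x = c}"
    using assms(2,3) P_subset_Q by auto
  have face: "P \<inter> E face_of P"
    unfolding PE using P_le by (intro face_of_Int_supporting_hyperplane_le convex_P) auto
  have "E = convex hull (P \<inter> E)"
    using supporting_hyperplane_Q(3)[OF P_le] assms(2,5) PE by (simp add: Int_insert_left)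
  then show E: "E = P \<inter> E"
    using face by (metis convex_hull_eq face_of_imp_convex)
  have "E \<noteq> {}" "aff_dim E = int DIM('a) - 1"
    using assms(1) by (auto simp: facet_of_Q_iff)
  then have K: "P \<inter> E facet_of P"
    using face E[symmetric] aff_dim_P by (simp add: facet_of_def)
  then have "n (P \<inter> E) \<bullet> v < b (P \<inter> E)"
    using facet_supporting_sign[OF K assms(4) P_le] assms(5) PE by (simp add: sgn_if split: if_splits)
  then show "P \<inter> E \<in> beneath_facets"
    using K beyond_S on_\<F> unfolding beneath_facets_def by force
qed

lemma facet_of_Q_through_v:
  assumes E: "E facet_of Q" "E = Q \<inter> {x. a \<bullet> x = c}"
    and supp: "Q \<subseteq> {x. a \<bullet> x \<le> c}" "a \<noteq> 0" "a \<bullet> v = c"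
  shows "P \<inter> E \<in> \<F> \<union> horizon_ridges" "E = convex hull (insert v (P \<inter> E))"
proof -
  have P_le: "P \<subseteq> {x. a \<bullet> x \<le> c}" and PE: "P \<inter> E = P \<inter> {x. a \<bullet> x = c}"
    using E(2) supp(1) P_subset_Q by auto
  show E_pyramid: "E = convex hull (insert v (P \<inter> E))"
    using supporting_hyperplane_Q(3)[OF P_le] supp(3) E(2) PE by (simp add: Int_insert_left)
  have dim_E: "aff_dim E = int DIM('a) - 1"
    using E(1) by (simp add: facet_of_Q_iff)
  moreover have "aff_dim (P \<inter> E) \<le> aff_dim E"
    by (rule aff_dim_subset) blast
  moreover have "aff_dim E \<le> aff_dim (P \<inter> E) + 1"
    using arg_cong[OF E_pyramid, of aff_dim] by (simp add: aff_dim_convex_hull aff_dim_insert)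
  ultimately consider "aff_dim (P \<inter> E) = int DIM('a) - 1" | "aff_dim (P \<inter> E) = int DIM('a) - 2"
    by linarith
  then show "P \<inter> E \<in> \<F> \<union> horizon_ridges"
  proof cases
    case 1
    moreover have "P \<inter> E face_of P"
      unfolding PE using P_le by (intro face_of_Int_supporting_hyperplane_le convex_P) auto
    ultimately have K: "P \<inter> E facet_of P"
      using dim_ge_2 aff_dim_P by (auto simp: facet_of_def)
    then have "n (P \<inter> E) \<bullet> v = b (P \<inter> E)"
      using facet_supporting_sign[OF K supp(2) P_le] supp(3) PE by (simp add: sgn_if split: if_splits)
    then show ?thesis
      using K beyond_S beneath_others by force
  next
    case 2
    then show ?thesis
      using ridge_base_in_horizon[OF E supp(1,3)] by blast
  qed
qed

lemma facet_of_Q_cases: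
  assumes "E facet_of Q"
  shows "P \<inter> E \<in> beneath_facets \<and> E = P \<inter> E
    \<or> P \<inter> E \<in> \<F> \<union> horizon_ridges \<and> E = convex hull (insert v (P \<inter> E))"
proof -
  obtain a c where a: "a \<noteq> 0" "Q \<subseteq> {x. a \<bullet> x \<le> c}" "E = Q \<inter> {x. a \<bullet> x = c}"
    using facet_of_polyhedron[OF polytope_imp_polyhedron[OF polytope_Q] assms] by metis
  have "a \<bullet> v \<le> c"
    using a(2) hull_inc[of v "insert v P"] by auto
  then consider "a \<bullet> v < c" | "a \<bullet> v = c"
    by linarith
  then show ?thesis
  proof cases
    case 1
    then show ?thesis
      using facet_of_Q_off_v[OF assms a(3,2,1)] by blast
  next
    case 2
    then show ?thesis
      using facet_of_Q_through_v[OF assms a(3,2,1)] by blast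
  qed
qed

lemma beneath_facets_disjoint: "beneath_facets \<inter> \<F> = {}"
  and facets_horizon_disjoint: "(beneath_facets \<union> \<F>) \<inter> horizon_ridges = {}"
  using aff_dim_horizon_ridge facet_of_P_aff_dim facet_\<F> unfolding beneath_facets_def by fastforce+

lemma bij_betw_facets_Q: "bij_betw ((\<inter>) P) {E. E facet_of Q} (beneath_facets \<union> \<F> \<union> horizon_ridges)"
proof (rule bij_betw_imageI)
  show "inj_on ((\<inter>) P) {E. E facet_of Q}"
  proof
    fix E E' assume "E \<in> {E. E facet_of Q}" "E' \<in> {E. E facet_of Q}" "P \<inter> E = P \<inter> E'"
    \<comment> \<open>a facet of Q is recovered from its trace on P\<close>
    moreover have "E = (if P \<inter> E \<in> beneath_facets then P \<inter> E else convex hull (insert v (P \<inter> E)))"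
      if "E facet_of Q" for E
    proof -
      have "K \<notin> beneath_facets" if "K \<in> \<F> \<union> horizon_ridges" for K
        using that beneath_facets_disjoint facets_horizon_disjoint by blast
      then show ?thesis
        using facet_of_Q_cases[OF \<open>E facet_of Q\<close>] by auto
    qed
    ultimately show "E = E'"
      by (metis mem_Collect_eq)
  qed
  show "(\<inter>) P ` {E. E facet_of Q} = beneath_facets \<union> \<F> \<union> horizon_ridges"
  proof
    show "(\<inter>) P ` {E. E facet_of Q} \<subseteq> beneath_facets \<union> \<F> \<union> horizon_ridges"
      using facet_of_Q_cases by blast
    have "K \<in> (\<inter>) P ` {E. E facet_of Q}" if "K \<in> beneath_facets" for K
    proof -
      have "K \<subseteq> P"
        using that facet_of_imp_subset unfolding beneath_facets_def by blast
      then show ?thesis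
        using beneath_facet_of_Q[OF that] by blast
    qed
    moreover have "K \<in> (\<inter>) P ` {E. E facet_of Q}" if "K \<in> \<F> \<union> horizon_ridges" for K
      using that on_pyramid_facet_of_Q horizon_pyramid_facet_of_Q by (metis (no_types) UnE image_eqI mem_Collect_eq)
    ultimately show "beneath_facets \<union> \<F> \<union> horizon_ridges \<subseteq> (\<inter>) P ` {E. E facet_of Q}"
      by blast
  qed
qed

lemma finite_beneath_facets: "finite beneath_facets"
  and finite_horizon_ridges: "finite horizon_ridges"
proof -
  have "adj P S \<subseteq> {F. F facet_of P}" "beneath_facets \<subseteq> {F. F facet_of P}"
    unfolding adj_def adjacent_def beneath_facets_def by auto
  then show "finite beneath_facets" "finite horizon_ridges"
    using finite_polytope_facets[OF polytope_P] unfolding horizon_ridges_def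
    by (auto intro: finite_subset)
qed

lemma finite_\<F>: "finite \<F>"
  by (rule finite_subset[OF _ finite_polytope_facets[OF polytope_P]]) (use facet_\<F> in blast)

lemma fdeg_Q_eq:
  assumes "G \<subseteq> P"
  shows "fdeg Q G = card {K \<in> beneath_facets. G \<subseteq> K} + card {F \<in> \<F>. G \<subseteq> F}
    + card {R \<in> horizon_ridges. G \<subseteq> R}"
proof -
  have "bij_betw ((\<inter>) P) {E \<in> {E. E facet_of Q}. G \<subseteq> E}
      {K \<in> beneath_facets \<union> \<F> \<union> horizon_ridges. G \<subseteq> K}"
    by (rule bij_betw_Collect[OF bij_betw_facets_Q]) (use assms in blast)
  then have "fdeg Q G = card {K \<in> beneath_facets \<union> \<F> \<union> horizon_ridges. G \<subseteq> K}"
    unfolding fdeg_def by (simp add: bij_betw_same_card)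
  also have "\<dots> = card ({K \<in> beneath_facets. G \<subseteq> K} \<union> {F \<in> \<F>. G \<subseteq> F}
      \<union> {R \<in> horizon_ridges. G \<subseteq> R})"
    by (rule arg_cong[where f = card]) blast
  also have "\<dots> = card {K \<in> beneath_facets. G \<subseteq> K} + card {F \<in> \<F>. G \<subseteq> F}
      + card {R \<in> horizon_ridges. G \<subseteq> R}"
    using beneath_facets_disjoint facets_horizon_disjoint finite_beneath_facets finite_horizon_ridges finite_\<F>
    by (subst card_Un_disjoint; (subst card_Un_disjoint)?) auto
  finally show ?thesis .
qed

lemma fdeg_P_eq:
  assumes "G \<subseteq> S"
  shows "fdeg P G = card {K \<in> beneath_facets. G \<subseteq> K} + card {F \<in> \<F>. G \<subseteq> F} + 1"
proof -
  have "{F. F facet_of P \<and> G \<subseteq> F} = insert S ({K \<in> beneath_facets. G \<subseteq> K} \<union> {F \<in> \<F>. G \<subseteq> F})"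
    using assms facet_S facet_\<F> unfolding beneath_facets_def by auto
  moreover have "S \<notin> {K \<in> beneath_facets. G \<subseteq> K} \<union> {F \<in> \<F>. G \<subseteq> F}"
    using facet_\<F> unfolding beneath_facets_def by auto
  ultimately show ?thesis
    unfolding fdeg_def using finite_beneath_facets finite_\<F> beneath_facets_disjoint
    by (simp add: card_Un_disjoint disjoint_iff)
qed

lemma card_on_and_horizon_containing_subridge:
  assumes "DIM('a) \<ge> 3" "G face_of P" "aff_dim G = int DIM('a) - 3" "G \<subseteq> S"
  shows "card {F \<in> \<F>. G \<subseteq> F} + card {R \<in> horizon_ridges. G \<subseteq> R} = 2"
proof -
  have "bij_betw (\<lambda>F. F \<inter> S) (adj P S - \<F>) horizon_ridges"
    using bij_betw_adj_facets_of_facet[OF d_polytope dim_ge_2 facet_S] unfolding horizon_ridges_def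
    by (meson Diff_subset bij_betw_def inj_on_subset)
  then have "bij_betw (\<lambda>F. F \<inter> S) {F \<in> adj P S - \<F>. G \<subseteq> F} {R \<in> horizon_ridges. G \<subseteq> R}"
    by (rule bij_betw_Collect) (use assms(4) in blast)
  then have "card {R \<in> horizon_ridges. G \<subseteq> R} = card {F \<in> adj P S - \<F>. G \<subseteq> F}"
    by (simp add: bij_betw_same_card)
  moreover have "finite (adj P S)"
    by (rule finite_subset[OF _ finite_polytope_facets[OF polytope_P]]) (auto simp: adj_def adjacent_def)
  then have "card {F \<in> adj P S. G \<subseteq> F} = card {F \<in> \<F>. G \<subseteq> F} + card {F \<in> adj P S - \<F>. G \<subseteq> F}"
    using adj_\<F> finite_\<F> by (subst card_Un_disjoint[symmetric]) (auto intro: arg_cong[where f = card])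
  ultimately show ?thesis
    using card_adj_containing_subridge[OF d_polytope assms(1) facet_S assms(2-4)] by simp
qed

lemma beneath_facet_containing_subridge:
  assumes "DIM('a) \<ge> 3" "nonsimple P S \<F>"
    and G: "G face_of P" "aff_dim G = int DIM('a) - 3" "G \<subseteq> S"
  obtains K where "K \<in> beneath_facets" "G \<subseteq> K"
proof -
  have "\<exists>F1 F2. {F \<in> adj P S. G \<subseteq> F} = {F1, F2} \<and> F1 \<noteq> F2"
    using card_adj_containing_subridge[OF d_polytope assms(1) facet_S G] by (simp add: card_2_iff)
  then obtain F1 F2 where "{F \<in> adj P S. G \<subseteq> F} = {F1, F2}"
    by blast
  then have "F1 \<in> {F \<in> adj P S. G \<subseteq> F}"
    by simp
  then obtain F where F: "F \<in> adj P S" "G \<subseteq> F"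
    by blast
  then have "F facet_of P" "F \<noteq> S"
    unfolding adj_def adjacent_def by auto
  show ?thesis
  proof (cases "F \<in> \<F>")
    case False
    then show ?thesis
      using that F \<open>F facet_of P\<close> \<open>F \<noteq> S\<close> unfolding beneath_facets_def by blast
  next
    case True
    \<comment> \<open>G is also a subridge of F, so besides S another facet X adjacent to F contains it\<close>
    have "\<exists>X1 X2. {X \<in> adj P F. G \<subseteq> X} = {X1, X2} \<and> X1 \<noteq> X2"
      using card_adj_containing_subridge[OF d_polytope assms(1) \<open>F facet_of P\<close> G(1,2) F(2)]
      by (simp add: card_2_iff)
    then obtain X1 X2 where two: "{X \<in> adj P F. G \<subseteq> X} = {X1, X2}" "X1 \<noteq> X2"
      by blast
    obtain X where "X \<in> {X1, X2}" "X \<noteq> S"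
      using two(2) by blast
    then have X: "X \<in> adj P F" "G \<subseteq> X" "X \<noteq> S"
      unfolding two(1)[symmetric] by auto
    then have "X facet_of P"
      unfolding adj_def adjacent_def by auto
    moreover have "X \<notin> \<F>"
    proof
      assume "X \<in> \<F>"
      moreover have "adjacent P F X"
        using X(1) unfolding adj_def by blast
      moreover have "G \<subseteq> F \<inter> X \<inter> S"
        using F(2) X(2) G(3) by blast
      ultimately show False
        using assms(2) True G(1,2) unfolding nonsimple_def by blast
    qed
    ultimately show ?thesis
      using that X unfolding beneath_facets_def by blast
  qed
qed

lemma subridge_face_of_Q:
  assumes "DIM('a) \<ge> 3" "nonsimple P S \<F>"
    and G: "G face_of P" "aff_dim G = int DIM('a) - 3" "G \<subseteq> S"
  shows "G face_of Q"
proof -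
  obtain K where K: "K \<in> beneath_facets" "G \<subseteq> K"
    using beneath_facet_containing_subridge[OF assms] .
  then have "G face_of K"
    using face_of_subset[OF G(1) K(2)] facet_of_imp_subset unfolding beneath_facets_def by blast
  then show ?thesis
    using face_of_trans facet_of_imp_face_of[OF beneath_facet_of_Q[OF K(1)]] by blast
qed

end

theorem proposition2p17:
  fixes P S G :: "'a::euclidean_space set" and \<F> :: "'a set set" and v :: 'a
  assumes "DIM('a) \<ge> 3"
    and "d_polytope P"
    and "simplex_facet P S"
    and "bounded_position P S"
    and "\<F> \<subseteq> adj P S"
    and "nonsimple P S \<F>"
    and "G face_of P" and "aff_dim G = int DIM('a) - 3" and "G \<subseteq> S"
    and "v \<in> VS S \<F> {} P"
  shows "0 \<le> card {F\<in>\<F>. G \<subseteq> F} \<and> card {F\<in>\<F>. G \<subseteq> F} \<le> 2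
       \<and> G face_of convex hull (insert v P)
       \<and> int (fdeg (convex hull (insert v P)) G)
           = int (fdeg P G) + 1 - int (card {F\<in>\<F>. G \<subseteq> F})"
proof -
  have P: "polytope P" "aff_dim P = DIM('a)" and S: "S facet_of P"
    using assms(2,3) unfolding d_polytope_def simplex_facet_def by auto
  then have "P \<noteq> {}"
    by auto
  then obtain r where "r \<in> P"
    by blast
  then obtain n b where nb: "\<And>F. F facet_of P \<Longrightarrow> exposing_ineq P F (n F) (b F)"
    using facet_normals_in_span[OF P(1)] by metis
  have facets_\<F>: "F facet_of P \<and> F \<noteq> S" if "F \<in> \<F>" for F
    using assms(5) that unfolding adj_def adjacent_def by auto
  interpret beyond_facet P S \<F> v n b
  proof
    show "b S < n S \<bullet> v"
      using hplus_hminus_exposing_ineq(2)[OF P(2) S nb[OF S]] assms(10) unfolding VS_def by blast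
    show "n F \<bullet> v = b F" if "F \<in> \<F>" for F
      using assms(10) that affine_hull_facet_full_dim[OF P(2) _ nb] facets_\<F>
      unfolding VS_def hyp_def by fastforce
    show "n F \<bullet> v < b F" if "F facet_of P" "F \<noteq> S" "F \<notin> \<F>" for F
      using hplus_hminus_exposing_ineq(1)[OF P(2) that(1) nb[OF that(1)]] assms(10) that unfolding VS_def by blast
  qed (use assms nb S in auto)
  have "G \<subseteq> P"
    using assms(7) face_of_imp_subset by blast
  then show ?thesis
    using fdeg_Q_eq fdeg_P_eq[OF assms(9)] card_on_and_horizon_containing_subridge[OF assms(1,7-9)]
      subridge_face_of_Q[OF assms(1,6-9)] by simp
qed

end
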